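(* $\lambda_1^\kappa\to\lambda_1$ as $\kappa\to0$.
   Context: Let $l>0$ and $\Psi\in C^3([0,l])$ with $\Psi>0$ on $[0,l]$, $\Psi'(s)=\Psi'''(s)=0$ for $s\in\{0,l\}$, and $\Psi''\Psi-(\Psi')^2[1+(\Psi')^2]>0$ at some $s_0\in(0,l)$. Let $I=[0,l]\times S^1$. $D$ is the surface of revolution parametrized by $(s,\theta)\in I\mapsto(\Psi(s)\cos\theta,\Psi(s)\sin\theta,s)$, with metric $g=\mathrm{diag}(1+\Psi'(s)^2,\Psi(s)^2)$, area element $dV_g=\sqrt{|g|}\,ds\,d\theta$, gradient $\nabla_g$ and Laplace–Beltrami operator $\Delta_g$. For $\kappa\neq0$, $M_\kappa$ is the surface parametrized by $(s,\theta)\in I\mapsto\big(\tfrac1\kappa(1-\cos\kappa s)+\Psi(s)\cos\theta\cos\kappa s,\ \Psi(s)\sin\theta,\ \tfrac1\kappa\sin\kappa s-\Psi(s)\cos\theta\sin\kappa s\big)$, with metric $g^\kappa=\mathrm{diag}\big(\Psi'(s)^2+(\kappa\Psi(s)\cos\theta-1)^2,\Psi(s)^2\big)$, area element $dV_{g^\kappa}=\sqrt{|g^\kappa|}\,ds\,d\theta$, gradient $\nabla_{g^\kappa}$ and Laplace–Beltrami operator $\Delta_{g^\kappa}$; $\delta_0>0$ is such that for $0<|\kappa|\le\delta_0$, $M_\kappa$ is a properly embedded surface with boundary the circles $s=0,s=l$ and outward unit normal $\nu$. Functions on $D$, $M_\kappa$ are identified with functions on $I$. Bandle, Punzo and Tesei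 constructed $f\in C^1(\mathbb{R})$ and a pattern (stable nonconstant stationary solution) $U_g=U_g(s)$ of the Neumann problem $\partial_t u=\Delta_g u+f(u)$ in $D$, $\partial u/\partial\nu=0$ on $\partial D$; $f$, $U_g$ denote these, and $\lambda_1=\inf_{0\ne q\in H^1(D)}\frac{\int_D(|\nabla_g q|^2-f'(U_g)q^2)\,dV_g}{\int_D q^2\,dV_g}$ is the principal eigenvalue of the linearization at $U_g$ (it is positive for this pattern). Fix $0<\alpha<1$; $\delta_1\in(0,\delta_0)$ and, for $0<|\kappa|<\delta_1$, $U_\kappa$ is a stationary solution of the Neumann problem on $M_\kappa$ ($\Delta_{g^\kappa}U_\kappa+f(U_\kappa)=0$ in $M_\kappa$, $\partial U_\kappa/\partial\nu=0$ on $\partial M_\kappa$) with $\|U_\kappa-U_g\|_{C^{2,\alpha}(I)}<\epsilon_1(\kappa)$ where $\epsilon_1(\kappa)\to0$ as $\kappa\to0$. For such $\kappa$, $\lambda_1^\kappa=\inf_{0\ne q\in H^1(M_\kappa)}\frac{\int_{M_\kappa}(|\nabla_{g^\kappa}q|^2-f'(U_\kappa)q^2)\,dV_{g^\kappa}}{\int_{M_\kappa}q^2\,dV_{g^\kappa}}$ is the principal eigenvalue of the linearization at $U_\kappa$ on $M_\kappa$ with Neumann boundary condition. *)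

theory Defs
  imports "HOL-Analysis.Analysis"
begin

text \<open>Coordinates: a point of I = [0,l] x S^1 is represented by a pair (s,theta) of reals,
  functions on I are functions on the strip [0,l] x R which are 2pi-periodic in theta.\<close>

definition strip :: "real \<Rightarrow> (real \<times> real) set" where
  "strip l = {0..l} \<times> UNIV"

definition fund :: "real \<Rightarrow> (real \<times> real) set" where
  "fund l = {0..l} \<times> {0..2*pi}"

definition theta_periodic :: "(real \<times> real \<Rightarrow> 'a) \<Rightarrow> bool" where
  "theta_periodic u \<longleftrightarrow> (\<forall>s t. u (s, t + 2*pi) = u (s, t))"

definition D :: "real \<Rightarrow> (real \<times> real \<Rightarrow> real) \<Rightarrow> real \<times> real \<Rightarrow> real \<times> real \<Rightarrow> real" where
  "D l u x v = frechet_derivative u (at x within strip l) v"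

definition C2_on_I :: "real \<Rightarrow> (real \<times> real \<Rightarrow> real) \<Rightarrow> bool" where
  "C2_on_I l u \<longleftrightarrow> theta_periodic u \<and>
     (\<forall>x\<in>strip l. u differentiable (at x within strip l)) \<and>
     (\<forall>v. \<forall>x\<in>strip l. (\<lambda>y. D l u y v) differentiable (at x within strip l)) \<and>
     (\<forall>v w. continuous_on (strip l) (\<lambda>x. D l (\<lambda>y. D l u y v) x w))"

definition basis2 :: "(real \<times> real) set" where
  "basis2 = {(1,0), (0,1)}"

definition hoelder_quot :: "real \<Rightarrow> real \<Rightarrow> (real \<times> real \<Rightarrow> real) \<Rightarrow> real set" where
  "hoelder_quot l \<alpha> h = {\<bar>h x - h y\<bar> / (dist x y powr \<alpha>) | x y. x \<in> strip l \<and> y \<in> strip l \<and> x \<noteq> y}"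

definition C2a :: "real \<Rightarrow> real \<Rightarrow> (real \<times> real \<Rightarrow> real) \<Rightarrow> bool" where
  "C2a l \<alpha> u \<longleftrightarrow> C2_on_I l u \<and> bounded (u ` strip l) \<and>
     (\<forall>v\<in>basis2. bounded ((\<lambda>x. D l u x v) ` strip l)) \<and>
     (\<forall>v\<in>basis2. \<forall>w\<in>basis2. bounded ((\<lambda>x. D l (\<lambda>y. D l u y v) x w) ` strip l)) \<and>
     (\<forall>v\<in>basis2. \<forall>w\<in>basis2. bdd_above (hoelder_quot l \<alpha> (\<lambda>x. D l (\<lambda>y. D l u y v) x w)))"

definition C2a_norm :: "real \<Rightarrow> real \<Rightarrow> (real \<times> real \<Rightarrow> real) \<Rightarrow> real" where
  "C2a_norm l \<alpha> u =
     (SUP x\<in>strip l. \<bar>u x\<bar>)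
     + (\<Sum>v\<in>basis2. SUP x\<in>strip l. \<bar>D l u x v\<bar>)
     + (\<Sum>v\<in>basis2. \<Sum>w\<in>basis2. SUP x\<in>strip l. \<bar>D l (\<lambda>y. D l u y v) x w\<bar>)
     + (\<Sum>v\<in>basis2. \<Sum>w\<in>basis2. Sup (hoelder_quot l \<alpha> (\<lambda>x. D l (\<lambda>y. D l u y v) x w)))"

text \<open>Diagonal metrics diag(g11,g22) in the coordinates (s,theta).\<close>
definition gD11 :: "(real \<Rightarrow> real) \<Rightarrow> real \<times> real \<Rightarrow> real" where
  "gD11 \<Psi>' x = 1 + (\<Psi>' (fst x))\<^sup>2"

definition g22 :: "(real \<Rightarrow> real) \<Rightarrow> real \<times> real \<Rightarrow> real" where
  "g22 \<Psi> x = (\<Psi> (fst x))\<^sup>2"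

definition gK11 :: "(real \<Rightarrow> real) \<Rightarrow> (real \<Rightarrow> real) \<Rightarrow> real \<Rightarrow> real \<times> real \<Rightarrow> real" where
  "gK11 \<Psi> \<Psi>' \<kappa> x = (\<Psi>' (fst x))\<^sup>2 + (\<kappa> * \<Psi> (fst x) * cos (snd x) - 1)\<^sup>2"

definition vol :: "(real \<times> real \<Rightarrow> real) \<Rightarrow> (real \<times> real \<Rightarrow> real) \<Rightarrow> real \<times> real \<Rightarrow> real" where
  "vol a b x = sqrt (a x * b x)"

definition LB :: "real \<Rightarrow> (real \<times> real \<Rightarrow> real) \<Rightarrow> (real \<times> real \<Rightarrow> real) \<Rightarrow> (real \<times> real \<Rightarrow> real) \<Rightarrow> real \<times> real \<Rightarrow> real" where
  "LB l a b u x = (1 / vol a b x) *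
     (D l (\<lambda>y. vol a b y / a y * D l u y (1,0)) x (1,0)
      + D l (\<lambda>y. vol a b y / b y * D l u y (0,1)) x (0,1))"

text \<open>Derivative along the outward unit normal at the boundary circles s = 0, s = l:
  nu = -(1/sqrt a) d_s at s = 0 and nu = (1/sqrt a) d_s at s = l.\<close>
definition normal_deriv :: "real \<Rightarrow> (real \<times> real \<Rightarrow> real) \<Rightarrow> (real \<times> real \<Rightarrow> real) \<Rightarrow> real \<times> real \<Rightarrow> real" where
  "normal_deriv l a u x = (if fst x = 0 then -1 else 1) * D l u x (1,0) / sqrt (a x)"

definition stationary_neumann ::
  "real \<Rightarrow> (real \<times> real \<Rightarrow> real) \<Rightarrow> (real \<times> real \<Rightarrow> real) \<Rightarrow> (real \<Rightarrow> real) \<Rightarrow> (real \<times> real \<Rightarrow> real) \<Rightarrow> bool" where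
  "stationary_neumann l a b f u \<longleftrightarrow> C2_on_I l u \<and>
     (\<forall>x\<in>strip l. LB l a b u x + f (u x) = 0) \<and>
     (\<forall>t. normal_deriv l a u (0, t) = 0 \<and> normal_deriv l a u (l, t) = 0)"

definition test_fun :: "real \<Rightarrow> (real \<times> real \<Rightarrow> real) \<Rightarrow> (real \<times> real \<Rightarrow> real) \<Rightarrow> (real \<times> real \<Rightarrow> real) \<Rightarrow> bool" where
  "test_fun l \<phi> ps pt \<longleftrightarrow>
     (\<forall>x. (\<phi> has_derivative (\<lambda>h. fst h * ps x + snd h * pt x)) (at x)) \<and>
     continuous_on UNIV ps \<and> continuous_on UNIV pt \<and>
     (\<exists>K. compact K \<and> K \<subseteq> {0<..<l} \<times> UNIV \<and> (\<forall>x. x \<notin> K \<longrightarrow> \<phi> x = 0))"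

definition weak_grad :: "real \<Rightarrow> (real \<times> real \<Rightarrow> real) \<Rightarrow> (real \<times> real \<Rightarrow> real) \<Rightarrow> (real \<times> real \<Rightarrow> real) \<Rightarrow> bool" where
  "weak_grad l q g1 g2 \<longleftrightarrow> (\<forall>\<phi> ps pt. test_fun l \<phi> ps pt \<longrightarrow>
     (\<integral>x. q x * ps x \<partial>lborel) = - (\<integral>x. g1 x * \<phi> x \<partial>lborel) \<and>
     (\<integral>x. q x * pt x \<partial>lborel) = - (\<integral>x. g2 x * \<phi> x \<partial>lborel))"

definition grad_sq :: "(real \<times> real \<Rightarrow> real) \<Rightarrow> (real \<times> real \<Rightarrow> real) \<Rightarrow> (real \<times> real \<Rightarrow> real) \<Rightarrow> (real \<times> real \<Rightarrow> real) \<Rightarrow> real \<times> real \<Rightarrow> real" where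
  "grad_sq a b g1 g2 x = (g1 x)\<^sup>2 / a x + (g2 x)\<^sup>2 / b x"

definition H1 :: "real \<Rightarrow> (real \<times> real \<Rightarrow> real) \<Rightarrow> (real \<times> real \<Rightarrow> real) \<Rightarrow> (real \<times> real \<Rightarrow> real) \<Rightarrow> (real \<times> real \<Rightarrow> real) \<Rightarrow> (real \<times> real \<Rightarrow> real) \<Rightarrow> bool" where
  "H1 l a b q g1 g2 \<longleftrightarrow>
     q \<in> borel_measurable lborel \<and> g1 \<in> borel_measurable lborel \<and> g2 \<in> borel_measurable lborel \<and>
     theta_periodic q \<and>
     set_integrable lborel (fund l) (\<lambda>x. (q x)\<^sup>2 * vol a b x) \<and>
     set_integrable lborel (fund l) (\<lambda>x. grad_sq a b g1 g2 x * vol a b x) \<and>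
     weak_grad l q g1 g2"

definition rayleigh_set :: "real \<Rightarrow> (real \<times> real \<Rightarrow> real) \<Rightarrow> (real \<times> real \<Rightarrow> real) \<Rightarrow> (real \<times> real \<Rightarrow> real) \<Rightarrow> real set" where
  "rayleigh_set l a b V =
     {(LINT x:fund l|lborel. (grad_sq a b g1 g2 x - V x * (q x)\<^sup>2) * vol a b x)
        / (LINT x:fund l|lborel. (q x)\<^sup>2 * vol a b x) | q g1 g2.
        H1 l a b q g1 g2 \<and> (LINT x:fund l|lborel. (q x)\<^sup>2 * vol a b x) \<noteq> 0}"

definition principal_eig :: "real \<Rightarrow> (real \<times> real \<Rightarrow> real) \<Rightarrow> (real \<times> real \<Rightarrow> real) \<Rightarrow> (real \<times> real \<Rightarrow> real) \<Rightarrow> real" where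
  "principal_eig l a b V = Inf (rayleigh_set l a b V)"

definition Mpar :: "(real \<Rightarrow> real) \<Rightarrow> real \<Rightarrow> real \<times> real \<Rightarrow> real \<times> real \<times> real" where
  "Mpar \<Psi> \<kappa> x =
     ((1 / \<kappa>) * (1 - cos (\<kappa> * fst x)) + \<Psi> (fst x) * cos (snd x) * cos (\<kappa> * fst x),
      \<Psi> (fst x) * sin (snd x),
      (1 / \<kappa>) * sin (\<kappa> * fst x) - \<Psi> (fst x) * cos (snd x) * sin (\<kappa> * fst x))"

end

theory Submission
  imports Defs
begin

(* The principal eigenvalue is the infimum of the Rayleigh quotient over H^1. If two metric
   coefficients g11 agree up to a factor s on the cylinder, the area weight sqrt|g| and the
   weight sqrt|g| / g11 of the s-derivative agree up to the factor s as well, so both surfaces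
   have the same admissible test functions. After shifting the potential by a constant
   C > sup |V0|, the numerator becomes a positive form, and if the potentials differ by at most
   eta, the shifted quotient of every test function changes at most by the factors (1 - eta) / s^2
   and s^2 (1 + eta); hence so does the shifted infimum. As kappa -> 0, g^kappa_11 -> g_11
   uniformly, so s -> 1, and f'(U_kappa) -> f'(U_g) uniformly because the C^{2,alpha} norm
   dominates the sup norm. *)

lemma sets_fund: "fund l \<in> sets borel"
  unfolding fund_def by (intro borel_closed closed_Times closed_atLeastAtMost)

lemma compact_fund: "compact (fund l)"
  unfolding fund_def by (intro compact_Times compact_Icc)

lemma fund_subset_strip: "fund l \<subseteq> strip l"
  unfolding fund_def strip_def by auto

lemma fst_in_fund: "x \<in> fund l \<Longrightarrow> fst x \<in> {0..l}"
  unfolding fund_def by auto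

lemma set_borel_measurable_mult_continuous:
  fixes u c :: "'a::euclidean_space \<Rightarrow> real"
  assumes "u \<in> borel_measurable lborel" "continuous_on A c" "A \<in> sets borel"
  shows "set_borel_measurable lborel A (\<lambda>x. u x * c x)"
proof -
  have "(\<lambda>x. indicator A x * c x) \<in> borel_measurable borel"
    using borel_measurable_continuous_on_indicator[OF assms(3,2)] by simp
  moreover have "u \<in> borel_measurable borel" using assms(1) by simp
  ultimately have "(\<lambda>x. u x * (indicator A x * c x)) \<in> borel_measurable borel"
    by measurable
  then show ?thesis
    unfolding set_borel_measurable_def by (simp add: mult.left_commute)
qed

lemma set_integral_nonneg:
  fixes f :: "'a \<Rightarrow> real"
  assumes "\<And>x. x \<in> A \<Longrightarrow> 0 \<le> f x"
  shows "0 \<le> (LINT x:A|M. f x)"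
  unfolding set_lebesgue_integral_def
  by (rule Bochner_Integration.integral_nonneg) (use assms in \<open>auto simp: indicator_def\<close>)

definition comparable_on :: "'a set \<Rightarrow> ('a \<Rightarrow> real) \<Rightarrow> ('a \<Rightarrow> real) \<Rightarrow> real \<Rightarrow> bool" where
  "comparable_on A a0 a1 s \<longleftrightarrow> (\<forall>x\<in>A. 0 < a0 x \<and> 0 < a1 x \<and> a1 x \<le> s * a0 x \<and> a0 x \<le> s * a1 x)"

lemma comparable_on_sym: "comparable_on A a0 a1 s \<longleftrightarrow> comparable_on A a1 a0 s"
  unfolding comparable_on_def by auto

lemma comparable_on_mono: "comparable_on A a0 a1 s \<Longrightarrow> s \<le> t \<Longrightarrow> comparable_on A a0 a1 t"
  unfolding comparable_on_def by (meson less_imp_le mult_right_mono order_trans)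

lemma vol_nonneg: "0 < a x \<Longrightarrow> 0 < b x \<Longrightarrow> 0 \<le> vol a b x"
  unfolding vol_def by simp

lemma grad_sq_vol_eq:
  "grad_sq a b g1 g2 x * vol a b x = (g1 x)\<^sup>2 * (vol a b x / a x) + (g2 x)\<^sup>2 * (vol a b x / b x)"
  unfolding grad_sq_def by (simp add: algebra_simps)

lemma grad_sq_vol_nonneg: "0 < a x \<Longrightarrow> 0 < b x \<Longrightarrow> 0 \<le> grad_sq a b g1 g2 x * vol a b x"
  unfolding grad_sq_vol_eq by (intro add_nonneg_nonneg mult_nonneg_nonneg) (auto simp: vol_def)

lemma continuous_on_vol:
  "continuous_on A a \<Longrightarrow> continuous_on A b \<Longrightarrow> continuous_on A (vol a b)"
  unfolding vol_def[abs_def] by (intro continuous_intros)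

lemma vol_le_scaled:
  assumes a: "0 < a0 x" "0 < a1 x" "a1 x \<le> s * a0 x" "a0 x \<le> s * a1 x"
    and b: "0 < b x" and s: "1 \<le> s"
  shows "vol a1 b x \<le> s * vol a0 b x" "vol a1 b x / a1 x \<le> s * (vol a0 b x / a0 x)"
proof -
  have sqrt_s: "sqrt s \<le> s"
    using s real_sqrt_le_mono[of s "s * s"] mult_left_mono[of 1 s s] by simp
  have "sqrt (a1 x) \<le> sqrt s * sqrt (a0 x)"
    using a(3) by (metis real_sqrt_le_mono real_sqrt_mult)
  also have "\<dots> \<le> s * sqrt (a0 x)" using sqrt_s a by (intro mult_right_mono) auto
  finally have up: "sqrt (a1 x) \<le> s * sqrt (a0 x)" .
  have "sqrt (a0 x) \<le> sqrt s * sqrt (a1 x)"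
    using a(4) by (metis real_sqrt_le_mono real_sqrt_mult)
  also have "\<dots> \<le> s * sqrt (a1 x)" using sqrt_s a by (intro mult_right_mono) auto
  finally have down: "sqrt (a0 x) \<le> s * sqrt (a1 x)" .
  have vol_eq: "vol a b x = sqrt (a x) * sqrt (b x)" for a by (simp add: vol_def real_sqrt_mult)
  have vol_div: "vol a b x / a x = sqrt (b x) / sqrt (a x)" if "0 < a x" for a
    unfolding vol_eq using that by (simp add: field_simps)
  show "vol a1 b x \<le> s * vol a0 b x"
    unfolding vol_eq using mult_right_mono[OF up, of "sqrt (b x)"] b by (simp add: mult.assoc)
  have "sqrt (b x) / sqrt (a1 x) = sqrt (b x) * sqrt (a0 x) / (sqrt (a0 x) * sqrt (a1 x))"
    using a by simp
  also have "\<dots> \<le> s * sqrt (b x) * sqrt (a1 x) / (sqrt (a0 x) * sqrt (a1 x))"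
    using mult_left_mono[OF down, of "sqrt (b x)"] a b
    by (intro divide_right_mono) (auto simp: mult_ac)
  also have "\<dots> = s * (sqrt (b x) / sqrt (a0 x))"
    using a by simp
  finally show "vol a1 b x / a1 x \<le> s * (vol a0 b x / a0 x)"
    unfolding vol_div[of a0, OF a(1)] vol_div[of a1, OF a(2)] .
qed

lemma set_integrable_scaled_bound:
  fixes f g :: "'a \<Rightarrow> real"
  assumes f: "set_integrable M A f" and g: "set_borel_measurable M A g"
    and bound: "\<And>x. x \<in> A \<Longrightarrow> 0 \<le> g x \<and> g x \<le> c * f x"
  shows "set_integrable M A g" "(LINT x:A|M. g x) \<le> c * (LINT x:A|M. f x)"
proof -
  have cf: "set_integrable M A (\<lambda>x. c * f x)" using f by simp
  have "norm (g x) \<le> norm (c * f x)" if "x \<in> A" for x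
    using bound[OF that] abs_ge_self[of "c * f x"] by simp
  then show g_int: "set_integrable M A g"
    by (intro set_integrable_bound[OF cf g] always_eventually) simp
  have "(LINT x:A|M. g x) \<le> (LINT x:A|M. c * f x)"
    by (rule set_integral_mono[OF g_int cf]) (use bound in auto)
  then show "(LINT x:A|M. g x) \<le> c * (LINT x:A|M. f x)" by simp
qed

section \<open>Rayleigh quotients\<close>

type_synonym cyl_fun = "real \<times> real \<Rightarrow> real"

definition mass_integral :: "real \<Rightarrow> cyl_fun \<Rightarrow> cyl_fun \<Rightarrow> cyl_fun \<Rightarrow> real" where
  "mass_integral l a b q = (LINT x:fund l|lborel. (q x)\<^sup>2 * vol a b x)"

definition dirichlet_integral :: "real \<Rightarrow> cyl_fun \<Rightarrow> cyl_fun \<Rightarrow> cyl_fun \<Rightarrow> cyl_fun \<Rightarrow> real" where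
  "dirichlet_integral l a b g1 g2 = (LINT x:fund l|lborel. grad_sq a b g1 g2 x * vol a b x)"

definition energy_integral ::
    "real \<Rightarrow> cyl_fun \<Rightarrow> cyl_fun \<Rightarrow> cyl_fun \<Rightarrow> cyl_fun \<Rightarrow> cyl_fun \<Rightarrow> cyl_fun \<Rightarrow> real" where
  "energy_integral l a b V q g1 g2 =
     (LINT x:fund l|lborel. (grad_sq a b g1 g2 x - V x * (q x)\<^sup>2) * vol a b x)"

definition admissible :: "real \<Rightarrow> cyl_fun \<Rightarrow> cyl_fun \<Rightarrow> (cyl_fun \<times> cyl_fun \<times> cyl_fun) set" where
  "admissible l a b = {(q, g1, g2). H1 l a b q g1 g2 \<and> mass_integral l a b q \<noteq> 0}"

definition rayleigh_quotient ::
    "real \<Rightarrow> cyl_fun \<Rightarrow> cyl_fun \<Rightarrow> cyl_fun \<Rightarrow> cyl_fun \<times> cyl_fun \<times> cyl_fun \<Rightarrow> real" where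
  "rayleigh_quotient l a b V =
     (\<lambda>(q, g1, g2). energy_integral l a b V q g1 g2 / mass_integral l a b q)"

lemma principal_eig_eq_Inf:
  "principal_eig l a b V = Inf (rayleigh_quotient l a b V ` admissible l a b)"
  unfolding principal_eig_def rayleigh_set_def rayleigh_quotient_def admissible_def
    energy_integral_def mass_integral_def
  by (auto simp: image_def intro!: arg_cong[where f = Inf])

lemma mass_integral_nonneg:
  "\<forall>x\<in>fund l. 0 < a x \<and> 0 < b x \<Longrightarrow> 0 \<le> mass_integral l a b q"
  unfolding mass_integral_def by (rule set_integral_nonneg) (simp add: vol_nonneg)

lemma dirichlet_integral_nonneg:
  "\<forall>x\<in>fund l. 0 < a x \<and> 0 < b x \<Longrightarrow> 0 \<le> dirichlet_integral l a b g1 g2"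
  unfolding dirichlet_integral_def by (rule set_integral_nonneg) (simp add: grad_sq_vol_nonneg)

lemma set_borel_measurable_grad_sq_vol:
  assumes "g1 \<in> borel_measurable lborel" "g2 \<in> borel_measurable lborel"
    and "continuous_on (fund l) a" "continuous_on (fund l) b" "\<forall>x\<in>fund l. 0 < a x \<and> 0 < b x"
  shows "set_borel_measurable lborel (fund l) (\<lambda>x. grad_sq a b g1 g2 x * vol a b x)"
proof -
  have "set_borel_measurable lborel (fund l) (\<lambda>x. (g x)\<^sup>2 * (vol a b x / c x))"
    if "g \<in> borel_measurable lborel" "continuous_on (fund l) c" "\<forall>x\<in>fund l. 0 < c x" for g c
    using assms that by (intro set_borel_measurable_mult_continuous sets_fund continuous_intros
        continuous_on_vol) auto
  from this[of g1 a] this[of g2 b] show ?thesis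
    using assms
    unfolding grad_sq_vol_eq set_borel_measurable_def by (simp add: distrib_left)
qed

lemma H1_comparable:
  assumes cmp: "comparable_on (fund l) a0 a1 s" and s: "1 \<le> s"
    and b: "\<forall>x\<in>fund l. 0 < b x"
    and cont: "continuous_on (fund l) a1" "continuous_on (fund l) b"
    and H: "H1 l a0 b q g1 g2"
  shows "H1 l a1 b q g1 g2"
    and "mass_integral l a1 b q \<le> s * mass_integral l a0 b q"
    and "dirichlet_integral l a1 b g1 g2 \<le> s * dirichlet_integral l a0 b g1 g2"
proof -
  have pos: "\<forall>x\<in>fund l. 0 < a1 x \<and> 0 < b x" using cmp b unfolding comparable_on_def by blast
  have vol: "vol a1 b x \<le> s * vol a0 b x" "vol a1 b x / a1 x \<le> s * (vol a0 b x / a0 x)"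
    if "x \<in> fund l" for x
    using vol_le_scaled[of a0 x a1 s b] cmp b s that unfolding comparable_on_def by auto
  have mass_le: "(q x)\<^sup>2 * vol a1 b x \<le> s * ((q x)\<^sup>2 * vol a0 b x)" if "x \<in> fund l" for x
    using mult_left_mono[OF vol(1)[OF that], of "(q x)\<^sup>2"] by (simp add: mult_ac)
  have grad_le: "grad_sq a1 b g1 g2 x * vol a1 b x \<le> s * (grad_sq a0 b g1 g2 x * vol a0 b x)"
    if x: "x \<in> fund l" for x
  proof -
    have "vol a1 b x / b x \<le> s * (vol a0 b x / b x)"
      using divide_right_mono[OF vol(1)[OF x] less_imp_le[OF bspec[OF b x]]] by simp
    then have "grad_sq a1 b g1 g2 x * vol a1 b x
        \<le> (g1 x)\<^sup>2 * (s * (vol a0 b x / a0 x)) + (g2 x)\<^sup>2 * (s * (vol a0 b x / b x))"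
      unfolding grad_sq_vol_eq using vol(2)[OF x] by (intro add_mono mult_left_mono) auto
    then show ?thesis
      unfolding grad_sq_vol_eq by (simp add: algebra_simps)
  qed
  have meas: "set_borel_measurable lborel (fund l) (\<lambda>x. (q x)\<^sup>2 * vol a1 b x)"
    "set_borel_measurable lborel (fund l) (\<lambda>x. grad_sq a1 b g1 g2 x * vol a1 b x)"
    using H pos cont unfolding H1_def
    by (auto intro: set_borel_measurable_mult_continuous[OF _ continuous_on_vol sets_fund]
        set_borel_measurable_grad_sq_vol)
  note mass = set_integrable_scaled_bound[OF _ meas(1), of "\<lambda>x. (q x)\<^sup>2 * vol a0 b x" s]
  note grad =
    set_integrable_scaled_bound[OF _ meas(2), of "\<lambda>x. grad_sq a0 b g1 g2 x * vol a0 b x" s]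
  show "H1 l a1 b q g1 g2"
    using H mass(1) grad(1) mass_le grad_le pos unfolding H1_def
    by (auto simp: vol_nonneg grad_sq_vol_nonneg)
  show "mass_integral l a1 b q \<le> s * mass_integral l a0 b q"
    using H mass(2) mass_le pos unfolding H1_def mass_integral_def by (auto simp: vol_nonneg)
  show "dirichlet_integral l a1 b g1 g2 \<le> s * dirichlet_integral l a0 b g1 g2"
    using H grad(2) grad_le pos unfolding H1_def dirichlet_integral_def
    by (auto simp: grad_sq_vol_nonneg)
qed

definition potential_integral :: "real \<Rightarrow> cyl_fun \<Rightarrow> cyl_fun \<Rightarrow> cyl_fun \<Rightarrow> cyl_fun \<Rightarrow> real" where
  "potential_integral l a b W q = (LINT x:fund l|lborel. W x * ((q x)\<^sup>2 * vol a b x))"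

lemma set_integrable_potential:
  assumes H: "H1 l a b q g1 g2"
    and cont: "continuous_on (fund l) a" "continuous_on (fund l) b" "continuous_on (fund l) W"
  shows "set_integrable lborel (fund l) (\<lambda>x. W x * ((q x)\<^sup>2 * vol a b x))"
proof -
  obtain C where C: "\<And>x. x \<in> fund l \<Longrightarrow> norm (W x) \<le> C"
    using compact_imp_bounded[OF compact_continuous_image[OF cont(3) compact_fund]]
    unfolding bounded_iff by auto
  have mass: "set_integrable lborel (fund l) (\<lambda>x. C * ((q x)\<^sup>2 * vol a b x))"
    using H unfolding H1_def by simp
  have "set_borel_measurable lborel (fund l) (\<lambda>x. (q x)\<^sup>2 * (W x * vol a b x))"
    using H cont unfolding H1_def
    by (intro set_borel_measurable_mult_continuous sets_fund continuous_intros continuous_on_vol)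
      auto
  moreover have "norm (W x * ((q x)\<^sup>2 * vol a b x)) \<le> norm (C * ((q x)\<^sup>2 * vol a b x))"
    if "x \<in> fund l" for x
    using C[OF that] by (simp add: abs_mult mult_right_mono vol_def)
  ultimately show ?thesis
    by (intro set_integrable_bound[OF mass] always_eventually) (simp_all add: mult_ac)
qed

lemma energy_integral_shift:
  assumes H: "H1 l a b q g1 g2"
    and cont: "continuous_on (fund l) a" "continuous_on (fund l) b" "continuous_on (fund l) V"
  shows "energy_integral l a b V q g1 g2 + C * mass_integral l a b q
       = dirichlet_integral l a b g1 g2 + potential_integral l a b (\<lambda>x. C - V x) q"
proof -
  have mass: "set_integrable lborel (fund l) (\<lambda>x. (q x)\<^sup>2 * vol a b x)"
    and grad: "set_integrable lborel (fund l) (\<lambda>x. grad_sq a b g1 g2 x * vol a b x)"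
    using H unfolding H1_def by auto
  have pot: "set_integrable lborel (fund l) (\<lambda>x. V x * ((q x)\<^sup>2 * vol a b x))"
    by (rule set_integrable_potential[OF H cont])
  have "energy_integral l a b V q g1 g2
      = (LINT x:fund l|lborel. grad_sq a b g1 g2 x * vol a b x - V x * ((q x)\<^sup>2 * vol a b x))"
    unfolding energy_integral_def by (simp add: algebra_simps)
  also have "\<dots> = dirichlet_integral l a b g1 g2
      - (LINT x:fund l|lborel. V x * ((q x)\<^sup>2 * vol a b x))"
    unfolding dirichlet_integral_def by (rule set_integral_diff(2)[OF grad pot])
  moreover have "potential_integral l a b (\<lambda>x. C - V x) q
      = C * mass_integral l a b q - (LINT x:fund l|lborel. V x * ((q x)\<^sup>2 * vol a b x))"
    unfolding potential_integral_def mass_integral_def left_diff_distrib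
    using set_integral_diff(2)[OF set_integrable_mult_right[OF mass, of C] pot] by simp
  ultimately show ?thesis by simp
qed

lemma perturbed_product_bounds:
  fixes m0 m1 w0 w1 s \<eta> :: real
  assumes m: "0 \<le> m0" "0 \<le> m1" "m1 \<le> s * m0" "m0 \<le> s * m1" and s: "1 \<le> s"
    and w: "1 \<le> w0" "\<bar>w1 - w0\<bar> \<le> \<eta>" and \<eta>: "\<eta> \<le> 1"
  shows "(1 - \<eta>) / s * (w0 * m0) \<le> w1 * m1" "w1 * m1 \<le> s * (1 + \<eta>) * (w0 * m0)"
proof -
  have "\<eta> \<le> \<eta> * w0" using w \<eta> by (simp add: mult_le_cancel_left1)
  then have up: "w1 \<le> (1 + \<eta>) * w0" and down: "(1 - \<eta>) * w0 \<le> w1"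
    using w by (auto simp: algebra_simps abs_le_iff)
  have "w1 * m1 \<le> ((1 + \<eta>) * w0) * (s * m0)"
    using up m w \<eta> by (intro mult_mono) auto
  then show "w1 * m1 \<le> s * (1 + \<eta>) * (w0 * m0)" by (simp add: mult_ac)
  have "m0 / s \<le> m1" using m s by (simp add: divide_le_eq mult.commute)
  then have "((1 - \<eta>) * w0) * (m0 / s) \<le> w1 * m1"
    using down m w \<eta> s by (intro mult_mono) auto
  then show "(1 - \<eta>) / s * (w0 * m0) \<le> w1 * m1" by (simp add: field_simps)
qed

lemma potential_integral_comparable:
  assumes cmp: "comparable_on (fund l) a0 a1 s" and s: "1 \<le> s"
    and b: "\<forall>x\<in>fund l. 0 < b x"
    and cont: "continuous_on (fund l) a0" "continuous_on (fund l) a1" "continuous_on (fund l) b"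
      "continuous_on (fund l) W0" "continuous_on (fund l) W1"
    and W: "\<forall>x\<in>fund l. 1 \<le> W0 x \<and> \<bar>W1 x - W0 x\<bar> \<le> \<eta>" and \<eta>: "\<eta> \<le> 1"
    and H: "H1 l a0 b q g1 g2"
  shows "0 \<le> potential_integral l a0 b W0 q"
    and "(1 - \<eta>) / s * potential_integral l a0 b W0 q \<le> potential_integral l a1 b W1 q"
    and "potential_integral l a1 b W1 q \<le> s * (1 + \<eta>) * potential_integral l a0 b W0 q"
proof -
  have H': "H1 l a1 b q g1 g2" by (rule H1_comparable(1)[OF cmp s b cont(2,3) H])
  have int0: "set_integrable lborel (fund l) (\<lambda>x. W0 x * ((q x)\<^sup>2 * vol a0 b x))"
    by (rule set_integrable_potential[OF H cont(1,3,4)])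
  have int1: "set_integrable lborel (fund l) (\<lambda>x. W1 x * ((q x)\<^sup>2 * vol a1 b x))"
    by (rule set_integrable_potential[OF H' cont(2,3,5)])
  have pointwise: "(1 - \<eta>) / s * (W0 x * ((q x)\<^sup>2 * vol a0 b x)) \<le> W1 x * ((q x)\<^sup>2 * vol a1 b x)
      \<and> W1 x * ((q x)\<^sup>2 * vol a1 b x) \<le> s * (1 + \<eta>) * (W0 x * ((q x)\<^sup>2 * vol a0 b x))"
    if x: "x \<in> fund l" for x
  proof -
    have "vol a1 b x \<le> s * vol a0 b x" "vol a0 b x \<le> s * vol a1 b x"
      using vol_le_scaled(1)[of a0 x a1 s b] vol_le_scaled(1)[of a1 x a0 s b] cmp b s x
      unfolding comparable_on_def by auto
    then have "(q x)\<^sup>2 * vol a1 b x \<le> (q x)\<^sup>2 * (s * vol a0 b x)"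
      "(q x)\<^sup>2 * vol a0 b x \<le> (q x)\<^sup>2 * (s * vol a1 b x)"
      by (auto intro: mult_left_mono)
    then have "(q x)\<^sup>2 * vol a1 b x \<le> s * ((q x)\<^sup>2 * vol a0 b x)"
      "(q x)\<^sup>2 * vol a0 b x \<le> s * ((q x)\<^sup>2 * vol a1 b x)"
      by (simp_all add: mult_ac)
    moreover have "0 \<le> (q x)\<^sup>2 * vol a0 b x" "0 \<le> (q x)\<^sup>2 * vol a1 b x"
      using cmp b x unfolding comparable_on_def by (auto simp: vol_nonneg)
    ultimately show ?thesis
      using perturbed_product_bounds[of "(q x)\<^sup>2 * vol a0 b x" "(q x)\<^sup>2 * vol a1 b x" s]
        s W \<eta> x by auto
  qed
  show "0 \<le> potential_integral l a0 b W0 q"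
    unfolding potential_integral_def using W cmp b
    by (intro set_integral_nonneg) (auto simp: comparable_on_def vol_nonneg)
  have "(LINT x:fund l|lborel. (1 - \<eta>) / s * (W0 x * ((q x)\<^sup>2 * vol a0 b x)))
      \<le> potential_integral l a1 b W1 q"
    unfolding potential_integral_def using int0 int1 pointwise by (intro set_integral_mono) auto
  then show "(1 - \<eta>) / s * potential_integral l a0 b W0 q \<le> potential_integral l a1 b W1 q"
    unfolding potential_integral_def by simp
  have "potential_integral l a1 b W1 q
      \<le> (LINT x:fund l|lborel. s * (1 + \<eta>) * (W0 x * ((q x)\<^sup>2 * vol a0 b x)))"
    unfolding potential_integral_def using int0 int1 pointwise by (intro set_integral_mono) auto
  then show "potential_integral l a1 b W1 q \<le> s * (1 + \<eta>) * potential_integral l a0 b W0 q"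
    unfolding potential_integral_def by simp
qed

lemma quotient_sandwich:
  fixes X0 X1 M0 M1 k K s :: real
  assumes X: "0 \<le> X0" "k * X0 \<le> X1" "X1 \<le> K * X0" "0 \<le> k"
    and M: "0 < M0" "M1 \<le> s * M0" "M0 \<le> s * M1" and s: "1 \<le> s"
  shows "k / s * (X0 / M0) \<le> X1 / M1" "X1 / M1 \<le> K * s * (X0 / M0)"
proof -
  have M1: "M0 / s \<le> M1" using M s by (simp add: divide_le_eq mult.commute)
  have M1_pos: "0 < M1" using M1 M s by (smt (verit) divide_pos_pos)
  have X1: "0 \<le> X1" using X by (smt (verit) mult_nonneg_nonneg)
  have "k / s * (X0 / M0) = (k * X0) / (s * M0)" by simp
  also have "\<dots> \<le> X1 / M1"
    using X X1 M M1_pos by (intro frac_le) auto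
  finally show "k / s * (X0 / M0) \<le> X1 / M1" .
  have "X1 / M1 \<le> (K * X0) / (M0 / s)"
    using X X1 M M1 s by (intro frac_le) auto
  also have "\<dots> = K * s * (X0 / M0)" by simp
  finally show "X1 / M1 \<le> K * s * (X0 / M0)" .
qed

lemma admissible_subset_comparable:
  assumes cmp: "comparable_on (fund l) a0 a1 s" and s: "1 \<le> s"
    and b: "\<forall>x\<in>fund l. 0 < b x"
    and cont: "continuous_on (fund l) a0" "continuous_on (fund l) a1" "continuous_on (fund l) b"
  shows "admissible l a0 b \<subseteq> admissible l a1 b"
proof clarify
  fix q g1 g2 assume "(q, g1, g2) \<in> admissible l a0 b"
  then have H: "H1 l a0 b q g1 g2" and M: "mass_integral l a0 b q \<noteq> 0"
    unfolding admissible_def by auto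
  have H': "H1 l a1 b q g1 g2" by (rule H1_comparable(1)[OF cmp s b cont(2,3) H])
  have "mass_integral l a0 b q \<le> s * mass_integral l a1 b q"
    using H1_comparable(2)[OF comparable_on_sym[THEN iffD1, OF cmp] s b cont(1,3) H'] .
  moreover have "0 \<le> mass_integral l a0 b q"
    using cmp b by (intro mass_integral_nonneg) (auto simp: comparable_on_def)
  ultimately have "mass_integral l a1 b q \<noteq> 0" using M by auto
  with H' show "(q, g1, g2) \<in> admissible l a1 b" unfolding admissible_def by auto
qed

lemma admissible_comparable:
  assumes "comparable_on (fund l) a0 a1 s" "1 \<le> s" "\<forall>x\<in>fund l. 0 < b x"
    and "continuous_on (fund l) a0" "continuous_on (fund l) a1" "continuous_on (fund l) b"
  shows "admissible l a1 b = admissible l a0 b"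
proof
  show "admissible l a0 b \<subseteq> admissible l a1 b"
    by (rule admissible_subset_comparable) (use assms in auto)
  show "admissible l a1 b \<subseteq> admissible l a0 b"
    by (rule admissible_subset_comparable)
      (use assms comparable_on_sym[THEN iffD1, OF assms(1)] in auto)
qed

lemma shifted_energy_comparable:
  assumes cmp: "comparable_on (fund l) a0 a1 s" and s: "1 \<le> s"
    and b: "\<forall>x\<in>fund l. 0 < b x"
    and cont: "continuous_on (fund l) a0" "continuous_on (fund l) a1" "continuous_on (fund l) b"
      "continuous_on (fund l) V0" "continuous_on (fund l) V1"
    and V: "\<forall>x\<in>fund l. \<bar>V1 x - V0 x\<bar> \<le> \<eta> \<and> \<bar>V0 x\<bar> + 1 \<le> C" and \<eta>: "0 \<le> \<eta>" "\<eta> \<le> 1"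
    and H: "H1 l a0 b q g1 g2"
  defines "E0 \<equiv> energy_integral l a0 b V0 q g1 g2 + C * mass_integral l a0 b q"
    and "E1 \<equiv> energy_integral l a1 b V1 q g1 g2 + C * mass_integral l a1 b q"
  shows "0 \<le> E0" "(1 - \<eta>) / s * E0 \<le> E1" "E1 \<le> s * (1 + \<eta>) * E0"
proof -
  have pos0: "\<forall>x\<in>fund l. 0 < a0 x \<and> 0 < b x"
    using cmp b unfolding comparable_on_def by auto
  have H': "H1 l a1 b q g1 g2" by (rule H1_comparable(1)[OF cmp s b cont(2,3) H])
  note G01 = H1_comparable(3)[OF cmp s b cont(2,3) H]
  note G10 = H1_comparable(3)[OF comparable_on_sym[THEN iffD1, OF cmp] s b cont(1,3) H']
  have W: "\<forall>x\<in>fund l. 1 \<le> C - V0 x \<and> \<bar>(C - V1 x) - (C - V0 x)\<bar> \<le> \<eta>"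
    using V by (auto simp: abs_le_iff)
  note R = potential_integral_comparable[OF cmp s b cont(1-3)
      continuous_on_diff[OF continuous_on_const cont(4)]
      continuous_on_diff[OF continuous_on_const cont(5)] W \<eta>(2) H]
  let ?G0 = "dirichlet_integral l a0 b g1 g2" and ?G1 = "dirichlet_integral l a1 b g1 g2"
  have E0: "E0 = ?G0 + potential_integral l a0 b (\<lambda>x. C - V0 x) q"
    unfolding E0_def by (rule energy_integral_shift[OF H cont(1,3,4)])
  have E1: "E1 = ?G1 + potential_integral l a1 b (\<lambda>x. C - V1 x) q"
    unfolding E1_def by (rule energy_integral_shift[OF H' cont(2,3,5)])
  have G0: "0 \<le> ?G0" by (rule dirichlet_integral_nonneg[OF pos0])
  then show "0 \<le> E0" unfolding E0 using R(1) by simp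
  have "(1 - \<eta>) / s * ?G0 \<le> ?G0 / s"
    using G0 s \<eta> by (simp add: divide_right_mono mult_left_le_one_le)
  also have "\<dots> \<le> ?G1" using G10 s by (simp add: divide_le_eq mult.commute)
  finally show "(1 - \<eta>) / s * E0 \<le> E1"
    unfolding E0 E1 using R(2) by (simp add: distrib_left)
  have "s \<le> s * (1 + \<eta>)" using s \<eta> by simp
  then have "?G1 \<le> s * (1 + \<eta>) * ?G0"
    using G01 mult_right_mono[OF _ G0] by (meson order_trans)
  then show "E1 \<le> s * (1 + \<eta>) * E0"
    unfolding E0 E1 using R(3) by (simp add: distrib_left)
qed

lemma rayleigh_quotient_comparable:
  assumes cmp: "comparable_on (fund l) a0 a1 s" and s: "1 \<le> s"
    and b: "\<forall>x\<in>fund l. 0 < b x"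
    and cont: "continuous_on (fund l) a0" "continuous_on (fund l) a1" "continuous_on (fund l) b"
      "continuous_on (fund l) V0" "continuous_on (fund l) V1"
    and V: "\<forall>x\<in>fund l. \<bar>V1 x - V0 x\<bar> \<le> \<eta> \<and> \<bar>V0 x\<bar> + 1 \<le> C" and \<eta>: "0 \<le> \<eta>" "\<eta> \<le> 1"
    and z: "z \<in> admissible l a0 b"
  shows "0 \<le> rayleigh_quotient l a0 b V0 z + C"
    and "(1 - \<eta>) / s\<^sup>2 * (rayleigh_quotient l a0 b V0 z + C) \<le> rayleigh_quotient l a1 b V1 z + C"
    and "rayleigh_quotient l a1 b V1 z + C \<le> s\<^sup>2 * (1 + \<eta>) * (rayleigh_quotient l a0 b V0 z + C)"
proof -
  obtain q g1 g2 where z_eq: "z = (q, g1, g2)" by (cases z)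
  have H: "H1 l a0 b q g1 g2" and M0: "mass_integral l a0 b q \<noteq> 0"
    using z unfolding z_eq admissible_def by auto
  have M0_pos: "0 < mass_integral l a0 b q"
    using M0 mass_integral_nonneg[of l a0 b q] cmp b by (auto simp: comparable_on_def less_le)
  have H': "H1 l a1 b q g1 g2" by (rule H1_comparable(1)[OF cmp s b cont(2,3) H])
  have M1: "mass_integral l a1 b q \<noteq> 0"
    using admissible_subset_comparable[OF cmp s b cont(1-3)] z unfolding z_eq admissible_def by auto
  note M01 = H1_comparable(2)[OF cmp s b cont(2,3) H]
  note M10 = H1_comparable(2)[OF comparable_on_sym[THEN iffD1, OF cmp] s b cont(1,3) H']
  have shift: "rayleigh_quotient l a b V z + C
      = (energy_integral l a b V q g1 g2 + C * mass_integral l a b q) / mass_integral l a b q"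
    if "mass_integral l a b q \<noteq> 0" for a V
    using that unfolding z_eq rayleigh_quotient_def by (simp add: field_simps)
  note E = shifted_energy_comparable[OF cmp s b cont V \<eta> H]
  note sandwich = quotient_sandwich[OF E(1) E(2,3) _ M0_pos M01 M10 s]
  show "0 \<le> rayleigh_quotient l a0 b V0 z + C"
    unfolding shift[OF M0] using E(1) M0_pos by simp
  show "(1 - \<eta>) / s\<^sup>2 * (rayleigh_quotient l a0 b V0 z + C) \<le> rayleigh_quotient l a1 b V1 z + C"
    using sandwich(1) s \<eta> unfolding shift[OF M0] shift[OF M1] by (simp add: power2_eq_square)
  show "rayleigh_quotient l a1 b V1 z + C \<le> s\<^sup>2 * (1 + \<eta>) * (rayleigh_quotient l a0 b V0 z + C)"
    using sandwich(2) s \<eta> unfolding shift[OF M0] shift[OF M1]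
    by (simp add: power2_eq_square mult_ac)
qed

section \<open>Comparison of principal eigenvalues\<close>

lemma Inf_image_sandwich:
  fixes F G :: "'a \<Rightarrow> real"
  assumes bounds: "\<And>z. z \<in> A \<Longrightarrow> 0 \<le> F z + C \<and> k * (F z + C) \<le> G z + C \<and> G z + C \<le> K * (F z + C)"
    and k: "0 \<le> k" "k \<le> 1" and K: "1 \<le> K"
  shows "\<bar>Inf (G ` A) - Inf (F ` A)\<bar> \<le> (K - k) * \<bar>Inf (F ` A) + C\<bar>"
proof (cases "A = {}")
  case True
  then show ?thesis using k K by simp
next
  case False
  have G_ge: "- C \<le> G z" if "z \<in> A" for z
    using bounds[OF that] mult_nonneg_nonneg[OF k(1), of "F z + C"] by linarith
  have F_ge: "- C \<le> F z" if "z \<in> A" for z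
    using bounds[OF that] by linarith
  have bdd: "bdd_below (F ` A)" "bdd_below (G ` A)"
    using F_ge G_ge by (auto intro!: bdd_belowI2[where m = "- C"])
  have "- C \<le> Inf (F ` A)"
    using False F_ge by (intro cInf_greatest) auto
  then have F_inf: "0 \<le> Inf (F ` A) + C" by simp
  have lower: "k * (Inf (F ` A) + C) - C \<le> Inf (G ` A)"
  proof (rule cInf_greatest)
    fix y assume "y \<in> G ` A"
    then obtain z where z: "z \<in> A" and y: "y = G z" by auto
    have "k * (Inf (F ` A) + C) \<le> k * (F z + C)"
      using cInf_lower[OF imageI[OF z] bdd(1)] k by (simp add: mult_left_mono)
    then show "k * (Inf (F ` A) + C) - C \<le> y" using bounds[OF z] y by linarith
  qed (use False in simp)
  have "(Inf (G ` A) + C) / K - C \<le> Inf (F ` A)"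
  proof (rule cInf_greatest)
    fix y assume "y \<in> F ` A"
    then obtain z where z: "z \<in> A" and y: "y = F z" by auto
    have "Inf (G ` A) + C \<le> K * (F z + C)"
      using cInf_lower[OF imageI[OF z] bdd(2)] bounds[OF z] by linarith
    then have "(Inf (G ` A) + C) / K \<le> F z + C" using K by (simp add: divide_le_eq mult.commute)
    then show "(Inf (G ` A) + C) / K - C \<le> y" using y by simp
  qed (use False in simp)
  then have "(Inf (G ` A) + C) / K \<le> Inf (F ` A) + C" by simp
  then have upper: "Inf (G ` A) + C \<le> K * (Inf (F ` A) + C)"
    using K by (simp add: divide_le_eq mult.commute)
  have "K * (Inf (F ` A) + C) - (Inf (F ` A) + C) \<le> (K - k) * (Inf (F ` A) + C)"
    "(Inf (F ` A) + C) - k * (Inf (F ` A) + C) \<le> (K - k) * (Inf (F ` A) + C)"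
    using mult_right_mono[OF _ F_inf, of "K - 1" "K - k"]
      mult_right_mono[OF _ F_inf, of "1 - k" "K - k"] k K by (simp_all add: algebra_simps)
  then have "Inf (G ` A) - Inf (F ` A) \<le> (K - k) * (Inf (F ` A) + C)"
    "Inf (F ` A) - Inf (G ` A) \<le> (K - k) * (Inf (F ` A) + C)"
    using upper lower by linarith+
  then show ?thesis using F_inf by (simp add: abs_le_iff)
qed

lemma principal_eig_comparable:
  assumes cmp: "comparable_on (fund l) a0 a1 s" and s: "1 \<le> s"
    and b: "\<forall>x\<in>fund l. 0 < b x"
    and cont: "continuous_on (fund l) a0" "continuous_on (fund l) a1" "continuous_on (fund l) b"
      "continuous_on (fund l) V0" "continuous_on (fund l) V1"
    and V: "\<forall>x\<in>fund l. \<bar>V1 x - V0 x\<bar> \<le> \<eta> \<and> \<bar>V0 x\<bar> + 1 \<le> C" and \<eta>: "0 \<le> \<eta>" "\<eta> \<le> 1"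
  shows "\<bar>principal_eig l a1 b V1 - principal_eig l a0 b V0\<bar>
     \<le> (s\<^sup>2 * (1 + \<eta>) - (1 - \<eta>) / s\<^sup>2) * \<bar>principal_eig l a0 b V0 + C\<bar>"
  unfolding principal_eig_eq_Inf admissible_comparable[OF cmp s b cont(1-3)]
proof (rule Inf_image_sandwich)
  have s2: "1 \<le> s\<^sup>2" using s by (simp add: one_le_power)
  show "0 \<le> (1 - \<eta>) / s\<^sup>2" "(1 - \<eta>) / s\<^sup>2 \<le> 1" using s2 \<eta> by (auto simp: divide_le_eq)
  show "1 \<le> s\<^sup>2 * (1 + \<eta>)" using mult_mono[OF s2, of 1 "1 + \<eta>"] \<eta> by simp
qed (use rayleigh_quotient_comparable[OF cmp s b cont V \<eta>] in blast)

lemma cubic_ratio_bound: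
  fixes \<rho> :: real
  assumes "0 \<le> \<rho>" "\<rho> \<le> 1"
  shows "(1 + \<rho>)\<^sup>2 * (1 + \<rho>) - (1 - \<rho>) / (1 + \<rho>)\<^sup>2 \<le> 10 * \<rho>"
proof -
  have sq: "\<rho>\<^sup>2 \<le> \<rho>" "\<rho> ^ 3 \<le> \<rho>"
    using assms by (auto simp: power2_eq_square power3_eq_cube mult_le_one mult_left_le_one_le)
  have "(1 - 3 * \<rho>) * (1 + \<rho>)\<^sup>2 \<le> 1 - \<rho>"
    using assms sq by (simp add: power2_eq_square power3_eq_cube algebra_simps)
  then have "1 - 3 * \<rho> \<le> (1 - \<rho>) / (1 + \<rho>)\<^sup>2"
    using assms by (simp add: le_divide_eq)
  moreover have "(1 + \<rho>)\<^sup>2 * (1 + \<rho>) \<le> 1 + 7 * \<rho>"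
    using sq by (simp add: power2_eq_square power3_eq_cube algebra_simps)
  ultimately show ?thesis by linarith
qed

section \<open>Continuity of the principal eigenvalue\<close>

lemma small_factor_exists:
  fixes e X :: real
  assumes e: "0 < e"
  shows "\<exists>\<rho>>0. \<rho> \<le> 1 \<and> 10 * \<rho> * \<bar>X\<bar> < e"
proof (intro exI conjI)
  have D: "0 < 20 * (\<bar>X\<bar> + 1)" by (smt (verit) abs_ge_zero)
  define \<rho> where "\<rho> = min 1 (e / (20 * (\<bar>X\<bar> + 1)))"
  show \<rho>: "0 < \<rho>" "\<rho> \<le> 1" unfolding \<rho>_def using e D by auto
  have "\<rho> * (20 * (\<bar>X\<bar> + 1)) \<le> e"
    using min.cobounded2[of 1 "e / (20 * (\<bar>X\<bar> + 1))"] D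
    unfolding \<rho>_def[symmetric] by (simp only: le_divide_eq if_True)
  moreover have "\<rho> * (20 * (\<bar>X\<bar> + 1)) = 20 * (\<rho> * \<bar>X\<bar>) + 20 * \<rho>"
    by (simp add: algebra_simps)
  moreover have "0 \<le> \<rho> * \<bar>X\<bar>" using \<rho> by simp
  ultimately show "10 * \<rho> * \<bar>X\<bar> < e" using \<rho> by linarith
qed

theorem principal_eig_tendsto:
  fixes a V :: "'k \<Rightarrow> cyl_fun"
  assumes b: "\<forall>x\<in>fund l. 0 < b x"
    and cont: "continuous_on (fund l) a0" "continuous_on (fund l) b" "continuous_on (fund l) V0"
    and cont_ev: "eventually (\<lambda>\<kappa>. continuous_on (fund l) (a \<kappa>) \<and> continuous_on (fund l) (V \<kappa>)) F"
    and a_lim: "\<And>\<rho>. 0 < \<rho> \<Longrightarrow> eventually (\<lambda>\<kappa>. comparable_on (fund l) a0 (a \<kappa>) (1 + \<rho>)) F"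
    and V_lim: "uniform_limit (fund l) V V0 F"
  shows "((\<lambda>\<kappa>. principal_eig l (a \<kappa>) b (V \<kappa>)) \<longlongrightarrow> principal_eig l a0 b V0) F"
proof (rule tendstoI)
  fix e :: real assume e: "0 < e"
  obtain B where B: "\<And>x. x \<in> fund l \<Longrightarrow> \<bar>V0 x\<bar> \<le> B"
    using compact_imp_bounded[OF compact_continuous_image[OF cont(3) compact_fund]]
    unfolding bounded_iff by auto
  define C where "C = B + 1"
  define L0 where "L0 = principal_eig l a0 b V0"
  obtain \<rho> where \<rho>: "0 < \<rho>" "\<rho> \<le> 1" and small: "10 * \<rho> * \<bar>L0 + C\<bar> < e"
    using small_factor_exists[OF e] by blast
  have "eventually (\<lambda>\<kappa>. \<forall>x\<in>fund l. dist (V \<kappa> x) (V0 x) < \<rho>) F"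
    using uniform_limitD[OF V_lim \<rho>(1)] .
  with cont_ev a_lim[OF \<rho>(1)] show "eventually (\<lambda>\<kappa>. dist (principal_eig l (a \<kappa>) b (V \<kappa>)) L0 < e) F"
  proof eventually_elim
    case (elim \<kappa>)
    have V: "\<forall>x\<in>fund l. \<bar>V \<kappa> x - V0 x\<bar> \<le> \<rho> \<and> \<bar>V0 x\<bar> + 1 \<le> C"
      using elim(3) B unfolding C_def dist_real_def by (auto intro: less_imp_le)
    have "\<bar>principal_eig l (a \<kappa>) b (V \<kappa>) - L0\<bar>
        \<le> ((1 + \<rho>)\<^sup>2 * (1 + \<rho>) - (1 - \<rho>) / (1 + \<rho>)\<^sup>2) * \<bar>L0 + C\<bar>"
      unfolding L0_def
      using principal_eig_comparable[OF elim(2) _ b cont(1) _ cont(2,3) _ V] elim(1) \<rho> by simp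
    also have "\<dots> \<le> 10 * \<rho> * \<bar>L0 + C\<bar>"
      using cubic_ratio_bound[of \<rho>] \<rho> by (intro mult_right_mono) auto
    finally show ?case using small by (simp add: dist_real_def)
  qed
qed

section \<open>Convergence of the coefficients as kappa tends to 0\<close>

lemma abs_le_C2a_norm:
  assumes h: "C2a l \<alpha> h" and x: "x \<in> strip l"
  shows "\<bar>h x\<bar> \<le> C2a_norm l \<alpha> h"
proof -
  have bdd: "bdd_above ((\<lambda>x. \<bar>g x\<bar>) ` strip l)"
    if g: "bounded (g ` strip l)" for g :: cyl_fun
  proof -
    obtain M where "\<forall>y\<in>g ` strip l. norm y \<le> M" using g unfolding bounded_iff by blast
    then show ?thesis by (intro bdd_aboveI2[where M = M]) auto
  qed
  have sup_nonneg: "0 \<le> (SUP x\<in>strip l. \<bar>g x\<bar>)"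
    if "bounded (g ` strip l)" for g :: cyl_fun
    by (rule cSUP_upper2[OF bdd[OF that] x]) simp
  have quot_nonneg: "0 \<le> Sup (hoelder_quot l \<alpha> g)" if "bdd_above (hoelder_quot l \<alpha> g)" for g
  proof -
    have "x \<noteq> (fst x, snd x + 1)" "(fst x, snd x + 1) \<in> strip l"
      using x unfolding strip_def by (cases x; auto)+
    then have "\<bar>g x - g (fst x, snd x + 1)\<bar> / dist x (fst x, snd x + 1) powr \<alpha> \<in> hoelder_quot l \<alpha> g"
      unfolding hoelder_quot_def using x by blast
    then show ?thesis by (rule cSup_upper2[OF _ _ that]) simp
  qed
  have "\<bar>h x\<bar> \<le> (SUP x\<in>strip l. \<bar>h x\<bar>)"
    using h bdd x unfolding C2a_def by (auto intro: cSUP_upper)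
  moreover have "0 \<le> (\<Sum>v\<in>basis2. SUP x\<in>strip l. \<bar>D l h x v\<bar>)"
    "0 \<le> (\<Sum>v\<in>basis2. \<Sum>w\<in>basis2. SUP x\<in>strip l. \<bar>D l (\<lambda>y. D l h y v) x w\<bar>)"
    "0 \<le> (\<Sum>v\<in>basis2. \<Sum>w\<in>basis2. Sup (hoelder_quot l \<alpha> (\<lambda>x. D l (\<lambda>y. D l h y v) x w)))"
    using h unfolding C2a_def by (auto intro!: sum_nonneg sup_nonneg quot_nonneg)
  ultimately show ?thesis unfolding C2a_norm_def by linarith
qed

lemma uniform_limit_of_C2a_norm:
  assumes close: "eventually (\<lambda>\<kappa>. C2a l \<alpha> (\<lambda>x. U \<kappa> x - u x)
      \<and> C2a_norm l \<alpha> (\<lambda>x. U \<kappa> x - u x) < \<epsilon> \<kappa>) F"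
    and \<epsilon>: "(\<epsilon> \<longlongrightarrow> 0) F"
  shows "uniform_limit (strip l) U u F"
proof (rule uniform_limitI)
  fix e :: real assume "0 < e"
  from close tendstoD[OF \<epsilon> this] show "eventually (\<lambda>\<kappa>. \<forall>x\<in>strip l. dist (U \<kappa> x) (u x) < e) F"
    by eventually_elim
      (use abs_le_C2a_norm[of l \<alpha> "\<lambda>x. U _ x - u x"] in \<open>fastforce simp: dist_real_def\<close>)
qed

lemma uniform_limit_compose_continuous:
  fixes f :: "'b::heine_borel \<Rightarrow> 'c::metric_space"
  assumes lim: "uniform_limit A g g0 F" and bdd: "bounded (g0 ` A)" and f: "continuous_on UNIV f"
  shows "uniform_limit A (\<lambda>\<kappa> y. f (g \<kappa> y)) (\<lambda>y. f (g0 y)) F"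
proof -
  obtain c R where R: "g0 ` A \<subseteq> cball c R"
    using bdd unfolding bounded_subset_cball by blast
  have "eventually (\<lambda>\<kappa>. \<forall>y\<in>A. g \<kappa> y \<in> cball c (R + 1)) F"
    using uniform_limitD[OF lim zero_less_one]
  proof eventually_elim
    case (elim \<kappa>)
    show ?case
    proof
      fix y assume "y \<in> A"
      then have "dist c (g0 y) \<le> R" "dist (g \<kappa> y) (g0 y) < 1" using R elim by auto
      then show "g \<kappa> y \<in> cball c (R + 1)" using dist_triangle2[of c "g \<kappa> y" "g0 y"] by simp
    qed
  qed
  moreover have "uniformly_continuous_on (cball c (R + 1)) f"
    by (intro compact_uniformly_continuous continuous_on_subset[OF f]) auto
  ultimately show ?thesis
    by (intro uniform_limit_compose_uniformly_continuous_on[OF lim]) auto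
qed

lemma comparable_of_abs_diff_le:
  fixes a0 a1 \<rho> :: real
  assumes a0: "1 \<le> a0" and diff: "\<bar>a1 - a0\<bar> \<le> \<rho> / 2" and \<rho>: "0 \<le> \<rho>" "\<rho> \<le> 1"
  shows "0 < a1 \<and> a1 \<le> (1 + \<rho>) * a0 \<and> a0 \<le> (1 + \<rho>) * a1"
proof -
  have lower: "a0 - \<rho> / 2 \<le> a1" and upper: "a1 \<le> a0 + \<rho> / 2"
    using abs_le_D1[OF diff] abs_le_D2[OF diff] by linarith+
  have \<rho>a0: "\<rho> \<le> \<rho> * a0" using a0 \<rho> by (simp add: mult_le_cancel_left1)
  have "\<rho> * \<rho> \<le> \<rho>" using \<rho> by (simp add: mult_left_le_one_le)
  moreover have "(1 + \<rho>) * (a0 - \<rho> / 2) \<le> (1 + \<rho>) * a1"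
    using lower \<rho> by (intro mult_left_mono) auto
  moreover have "(1 + \<rho>) * (a0 - \<rho> / 2) = a0 + \<rho> * a0 - \<rho> / 2 - \<rho> * \<rho> / 2"
    by (simp add: algebra_simps)
  ultimately have "a0 \<le> (1 + \<rho>) * a1" using \<rho>a0 by linarith
  moreover have "a1 \<le> (1 + \<rho>) * a0" using upper \<rho>a0 \<rho> by (simp add: algebra_simps)
  moreover have "0 < a1" using lower a0 \<rho> by linarith
  ultimately show ?thesis by blast
qed

lemma gK11_minus_gD11:
  "gK11 \<Psi> \<Psi>1 \<kappa> x - gD11 \<Psi>1 x = (\<kappa> * \<Psi> (fst x) * cos (snd x) - 1)\<^sup>2 - 1"
  unfolding gK11_def gD11_def by simp

lemma abs_shifted_square_le:
  fixes y :: real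
  assumes "\<bar>y\<bar> \<le> 1"
  shows "\<bar>(y - 1)\<^sup>2 - 1\<bar> \<le> 3 * \<bar>y\<bar>"
proof -
  have "\<bar>y - 2\<bar> \<le> 3" using assms by linarith
  then have "\<bar>y\<bar> * \<bar>y - 2\<bar> \<le> \<bar>y\<bar> * 3" by (intro mult_left_mono) auto
  moreover have "(y - 1)\<^sup>2 - 1 = y * (y - 2)" by (simp add: power2_eq_square algebra_simps)
  ultimately show ?thesis by (simp add: abs_mult mult.commute)
qed

lemma eventually_comparable_gK11_gD11:
  assumes \<Psi>: "continuous_on {0..l} \<Psi>" and \<rho>: "0 < \<rho>"
  shows "\<forall>\<^sub>F \<kappa> in at 0. comparable_on (fund l) (gD11 \<Psi>1) (gK11 \<Psi> \<Psi>1 \<kappa>) (1 + \<rho>)"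
proof -
  obtain P where P: "0 < P" "\<And>s. s \<in> {0..l} \<Longrightarrow> \<bar>\<Psi> s\<bar> \<le> P"
    using compact_imp_bounded[OF compact_continuous_image[OF \<Psi> compact_Icc]]
    unfolding bounded_pos by auto
  define r where "r = min \<rho> 1"
  have r: "0 < r" "r \<le> 1" "r \<le> \<rho>" using \<rho> unfolding r_def by auto
  have "0 < r / (6 * P)" using r P by simp
  from tendstoD[OF tendsto_ident_at this] have "\<forall>\<^sub>F \<kappa> in at 0. dist \<kappa> 0 < r / (6 * P)" .
  then show ?thesis
  proof eventually_elim
    case (elim \<kappa>)
    have "\<bar>\<kappa>\<bar> * (6 * P) < r"
      using elim P by (simp add: dist_real_def less_divide_eq)
    then have \<kappa>P: "\<bar>\<kappa>\<bar> * P \<le> r / 6" by simp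
    have "comparable_on (fund l) (gD11 \<Psi>1) (gK11 \<Psi> \<Psi>1 \<kappa>) (1 + r)"
      unfolding comparable_on_def
    proof
      fix x assume x: "x \<in> fund l"
      define y where "y = \<kappa> * \<Psi> (fst x) * cos (snd x)"
      have "\<bar>y\<bar> \<le> \<bar>\<kappa>\<bar> * P * 1"
        unfolding y_def abs_mult using P(2)[OF fst_in_fund[OF x]]
        by (intro mult_mono mult_left_mono) auto
      then have "\<bar>gK11 \<Psi> \<Psi>1 \<kappa> x - gD11 \<Psi>1 x\<bar> \<le> r / 2"
        using abs_shifted_square_le[of y] \<kappa>P r unfolding gK11_minus_gD11 y_def[symmetric] by simp
      moreover have "1 \<le> gD11 \<Psi>1 x" unfolding gD11_def by simp
      ultimately show "0 < gD11 \<Psi>1 x \<and> 0 < gK11 \<Psi> \<Psi>1 \<kappa> x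
          \<and> gK11 \<Psi> \<Psi>1 \<kappa> x \<le> (1 + r) * gD11 \<Psi>1 x \<and> gD11 \<Psi>1 x \<le> (1 + r) * gK11 \<Psi> \<Psi>1 \<kappa> x"
        using comparable_of_abs_diff_le[of "gD11 \<Psi>1 x" "gK11 \<Psi> \<Psi>1 \<kappa> x" r] r by auto
    qed
    then show ?case by (rule comparable_on_mono) (use r in simp)
  qed
qed

lemma continuous_on_fund_fst:
  "continuous_on {0..l} g \<Longrightarrow> continuous_on (fund l) (\<lambda>x. g (fst x))"
  by (rule continuous_on_compose2[OF _ continuous_on_fst[OF continuous_on_id]])
    (auto simp: fund_def)

lemma continuous_on_fund_coefficients:
  assumes "continuous_on {0..l} \<Psi>" "continuous_on {0..l} \<Psi>1"
  shows "continuous_on (fund l) (gD11 \<Psi>1)" "continuous_on (fund l) (g22 \<Psi>)"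
    "continuous_on (fund l) (gK11 \<Psi> \<Psi>1 \<kappa>)"
  unfolding gD11_def[abs_def] g22_def[abs_def] gK11_def[abs_def]
  by (intro continuous_intros continuous_on_fund_fst assms)+

lemma C2_on_I_continuous_on_fund:
  assumes "C2_on_I l u"
  shows "continuous_on (fund l) u"
proof -
  have "continuous_on (strip l) u"
    using assms unfolding C2_on_I_def continuous_on_eq_continuous_within
    by (blast intro: differentiable_imp_continuous_within)
  then show ?thesis using continuous_on_subset fund_subset_strip by blast
qed

theorem lemma4p5:
  fixes l \<alpha> \<delta>0 \<delta>1 :: real
    and \<Psi> \<Psi>1 \<Psi>2 \<Psi>3 :: "real \<Rightarrow> real"
    and f f' :: "real \<Rightarrow> real"
    and ug :: "real \<Rightarrow> real"
    and U :: "real \<Rightarrow> real \<times> real \<Rightarrow> real"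
    and \<epsilon>1 :: "real \<Rightarrow> real"
  assumes l_pos: "l > 0"
    and d1: "\<forall>s\<in>{0..l}. (\<Psi> has_real_derivative \<Psi>1 s) (at s within {0..l})"
    and d2: "\<forall>s\<in>{0..l}. (\<Psi>1 has_real_derivative \<Psi>2 s) (at s within {0..l})"
    and d3: "\<forall>s\<in>{0..l}. (\<Psi>2 has_real_derivative \<Psi>3 s) (at s within {0..l})"
    and d3c: "continuous_on {0..l} \<Psi>3"
    and Psi_pos: "\<forall>s\<in>{0..l}. \<Psi> s > 0"
    and Psi_bd: "\<Psi>1 0 = 0" "\<Psi>1 l = 0" "\<Psi>3 0 = 0" "\<Psi>3 l = 0"
    and Psi_s0: "\<exists>s0\<in>{0<..<l}. \<Psi>2 s0 * \<Psi> s0 - (\<Psi>1 s0)\<^sup>2 * (1 + (\<Psi>1 s0)\<^sup>2) > 0"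
    and f_C1: "\<forall>u. (f has_real_derivative f' u) (at u)" "continuous_on UNIV f'"
    and ug_stat: "stationary_neumann l (gD11 \<Psi>1) (g22 \<Psi>) f (\<lambda>x. ug (fst x))"
    and ug_nonconst: "\<exists>s1\<in>{0..l}. \<exists>s2\<in>{0..l}. ug s1 \<noteq> ug s2"
    and lam_pos: "principal_eig l (gD11 \<Psi>1) (g22 \<Psi>) (\<lambda>x. f' (ug (fst x))) > 0"
    and alpha: "0 < \<alpha>" "\<alpha> < 1"
    and delta0: "\<delta>0 > 0"
    and embedded: "\<forall>\<kappa>. 0 < \<bar>\<kappa>\<bar> \<and> \<bar>\<kappa>\<bar> \<le> \<delta>0 \<longrightarrow>
        inj_on (Mpar \<Psi> \<kappa>) ({0..l} \<times> {0..<2*pi}) \<and> (\<forall>x\<in>strip l. gK11 \<Psi> \<Psi>1 \<kappa> x > 0)"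
    and delta1: "0 < \<delta>1" "\<delta>1 < \<delta>0"
    and eps1: "(\<epsilon>1 \<longlongrightarrow> 0) (at 0)"
    and U_stat: "\<forall>\<kappa>. 0 < \<bar>\<kappa>\<bar> \<and> \<bar>\<kappa>\<bar> < \<delta>1 \<longrightarrow>
        stationary_neumann l (gK11 \<Psi> \<Psi>1 \<kappa>) (g22 \<Psi>) f (U \<kappa>) \<and> C2a l \<alpha> (U \<kappa>)"
    and U_close: "\<forall>\<kappa>. 0 < \<bar>\<kappa>\<bar> \<and> \<bar>\<kappa>\<bar> < \<delta>1 \<longrightarrow>
        C2a l \<alpha> (\<lambda>x. U \<kappa> x - ug (fst x)) \<and>
        C2a_norm l \<alpha> (\<lambda>x. U \<kappa> x - ug (fst x)) < \<epsilon>1 \<kappa>"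
  shows "((\<lambda>\<kappa>. principal_eig l (gK11 \<Psi> \<Psi>1 \<kappa>) (g22 \<Psi>) (\<lambda>x. f' (U \<kappa> x)))
          \<longlongrightarrow> principal_eig l (gD11 \<Psi>1) (g22 \<Psi>) (\<lambda>x. f' (ug (fst x)))) (at 0)"
proof -
  have \<Psi>: "continuous_on {0..l} \<Psi>" "continuous_on {0..l} \<Psi>1"
    using DERIV_continuous_on[OF d1[rule_format]] DERIV_continuous_on[OF d2[rule_format]] by auto
  have ug: "continuous_on (fund l) (\<lambda>x. ug (fst x))"
    using ug_stat unfolding stationary_neumann_def by (blast intro: C2_on_I_continuous_on_fund)
  have near0: "\<forall>\<^sub>F \<kappa> in at 0. 0 < \<bar>\<kappa>\<bar> \<and> \<bar>\<kappa>\<bar> < \<delta>1"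
    unfolding eventually_at using delta1 by (auto simp: dist_real_def)
  have "uniform_limit (strip l) U (\<lambda>x. ug (fst x)) (at 0)"
    using near0 U_close by (intro uniform_limit_of_C2a_norm[OF _ eps1]) (auto elim: eventually_mono)
  then have U_lim: "uniform_limit (fund l) U (\<lambda>x. ug (fst x)) (at 0)"
    using fund_subset_strip by (rule uniform_limit_on_subset)
  have U_cont: "\<forall>\<^sub>F \<kappa> in at 0. continuous_on (fund l) (U \<kappa>)"
    using near0 by eventually_elim
      (use U_stat in \<open>auto simp: stationary_neumann_def intro: C2_on_I_continuous_on_fund\<close>)
  have f'_cont: "continuous_on (fund l) u \<Longrightarrow> continuous_on (fund l) (\<lambda>x. f' (u x))" for u
    by (rule continuous_on_compose2[OF f_C1(2)]) auto
  show ?thesis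
  proof (rule principal_eig_tendsto)
    show "\<forall>x\<in>fund l. 0 < g22 \<Psi> x" using Psi_pos fst_in_fund by (fastforce simp: g22_def)
    show "\<forall>\<^sub>F \<kappa> in at 0. continuous_on (fund l) (gK11 \<Psi> \<Psi>1 \<kappa>)
        \<and> continuous_on (fund l) (\<lambda>x. f' (U \<kappa> x))"
      using U_cont by eventually_elim (simp add: continuous_on_fund_coefficients[OF \<Psi>] f'_cont)
    show "uniform_limit (fund l) (\<lambda>\<kappa> x. f' (U \<kappa> x)) (\<lambda>x. f' (ug (fst x))) (at 0)"
      using compact_imp_bounded[OF compact_continuous_image[OF ug compact_fund]]
      by (rule uniform_limit_compose_continuous[OF U_lim _ f_C1(2)])
  qed (use continuous_on_fund_coefficients[OF \<Psi>] f'_cont[OF ug]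
      eventually_comparable_gK11_gD11[OF \<Psi>(1)] in auto)
qed

end
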